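(* Let $X_1,\dots,X_N$ be random variables (jointly distributed arbitrarily) with values in $\{1,\dots,Z\}$, with marginals $p_i(z)=\Pr(X_i=z)$ and pooled distribution $P_z=\frac1N\sum_{i=1}^N p_i(z)$. Then $$\mathrm{PI}\le S(P)-\frac{1}{N^2}\sum_{i=1}^N\sum_{j=1}^N I(X_i:X_j),$$ where $I(X_i:X_j)$ is the mutual information (in bits) between $X_i$ and $X_j$, and $S(P)=-\sum_z P_z\log_2P_z$.
   Context: The positional information is $$\mathrm{PI}=\frac1N\sum_{i=1}^N\sum_{z=1}^Z p_i(z)\log_2\frac{p_i(z)}{P_z},$$ with the convention $0\log 0=0$. Shannon entropies and mutual informations are taken in base $2$. *)

theory Defs
  imports "HOL-Probability.Probability"
begin

definition marg :: "'a measure \<Rightarrow> (nat \<Rightarrow> 'a \<Rightarrow> nat) \<Rightarrow> nat \<Rightarrow> nat \<Rightarrow> real" where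
  "marg M X i z = measure M {\<omega> \<in> space M. X i \<omega> = z}"

definition pooled :: "'a measure \<Rightarrow> (nat \<Rightarrow> 'a \<Rightarrow> nat) \<Rightarrow> nat \<Rightarrow> nat \<Rightarrow> real" where
  "pooled M X N z = (1 / real N) * (\<Sum>i=1..N. marg M X i z)"

definition PI :: "'a measure \<Rightarrow> (nat \<Rightarrow> 'a \<Rightarrow> nat) \<Rightarrow> nat \<Rightarrow> nat \<Rightarrow> real" where
  "PI M X N Z = (1 / real N) * (\<Sum>i=1..N. \<Sum>z=1..Z.
      (if marg M X i z = 0 then 0
       else marg M X i z * log 2 (marg M X i z / pooled M X N z)))"

definition pooled_entropy :: "'a measure \<Rightarrow> (nat \<Rightarrow> 'a \<Rightarrow> nat) \<Rightarrow> nat \<Rightarrow> nat \<Rightarrow> real" where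
  "pooled_entropy M X N Z = - (\<Sum>z=1..Z.
      (if pooled M X N z = 0 then 0 else pooled M X N z * log 2 (pooled M X N z)))"

definition MI :: "'a measure \<Rightarrow> (nat \<Rightarrow> 'a \<Rightarrow> nat) \<Rightarrow> nat \<Rightarrow> nat \<Rightarrow> real" where
  "MI M X i j = prob_space.mutual_information M 2
      (count_space (X i ` space M)) (count_space (X j ` space M)) (X i) (X j)"

end

theory Submission
  imports Defs
begin

text \<open>Since \<open>p\<^sub>i(z) > 0\<close> forces \<open>P\<^sub>z > 0\<close>, splitting \<open>log(p\<^sub>i/P) = log p\<^sub>i - log P\<close> turns
  PI into the exact identity \<open>PI = S(P) - (1/N) \<Sum>\<^sub>i H(X\<^sub>i)\<close>: the mean divergence of the marginals
  from their mixture is the entropy of the mixture minus the mean entropy. The bound then only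
  needs \<open>I(X\<^sub>i:X\<^sub>j) \<le> H(X\<^sub>i)\<close>, i.e. nonnegativity of conditional entropy, summed over all pairs.\<close>

lemma mean_divergence_from_mixture:
  fixes p :: "'i \<Rightarrow> 'z \<Rightarrow> real" and P :: "'z \<Rightarrow> real" and I :: "'i set" and A :: "'z set"
  assumes "finite I" and "I \<noteq> {}" and p_nonneg: "\<And>i z. i \<in> I \<Longrightarrow> 0 \<le> p i z"
    and P_def: "\<And>z. P z = (1 / card I) * (\<Sum>i\<in>I. p i z)"
  shows "(1 / card I) * (\<Sum>i\<in>I. \<Sum>z\<in>A. (if p i z = 0 then 0 else p i z * log b (p i z / P z)))
       = - (\<Sum>z\<in>A. P z * log b (P z)) - (1 / card I) * (\<Sum>i\<in>I. - (\<Sum>z\<in>A. p i z * log b (p i z)))"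
proof -
  have card_pos: "real (card I) > 0"
    using assms(1,2) by (simp add: card_gt_0_iff)
  have sum_p: "(\<Sum>i\<in>I. p i z) = card I * P z" for z
    using card_pos by (simp add: P_def)
  have split_log: "(if p i z = 0 then 0 else p i z * log b (p i z / P z))
      = p i z * log b (p i z) - p i z * log b (P z)" if "i \<in> I" for i z
  proof (cases "p i z = 0")
    case False
    with p_nonneg[OF that, of z] have "p i z > 0" by simp
    moreover have "p i z \<le> card I * P z"
      unfolding sum_p[symmetric] using that assms(1) p_nonneg by (intro member_le_sum) auto
    ultimately have "P z > 0"
      using card_pos by (smt (verit) mult_le_0_iff)
    with \<open>p i z > 0\<close> show ?thesis by (simp add: log_divide algebra_simps)
  qed simp
  have "(\<Sum>i\<in>I. \<Sum>z\<in>A. p i z * log b (P z)) = (\<Sum>z\<in>A. card I * P z * log b (P z))"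
    by (subst sum.swap) (simp add: sum_p sum_distrib_right[symmetric])
  then have "(\<Sum>i\<in>I. \<Sum>z\<in>A. (if p i z = 0 then 0 else p i z * log b (p i z / P z)))
      = (\<Sum>i\<in>I. \<Sum>z\<in>A. p i z * log b (p i z)) - card I * (\<Sum>z\<in>A. P z * log b (P z))"
    by (simp add: split_log sum_subtractf sum_distrib_left mult.assoc)
  then show ?thesis
    using card_pos by (simp add: sum_negf field_simps)
qed

context information_space
begin

lemma entropy_eq_sum_finite_range:
  assumes "simple_function M X" and "X ` space M \<subseteq> A" and "finite A"
  shows "\<H>(X) = - (\<Sum>x\<in>A. prob {\<omega> \<in> space M. X \<omega> = x} * log b (prob {\<omega> \<in> space M. X \<omega> = x}))"
proof -
  have "simple_distributed M X (\<lambda>x. prob (X -` {x} \<inter> space M))"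
    using assms(1) by (rule simple_distributedI) auto
  then have "\<H>(X) = - (\<Sum>x\<in>X ` space M. prob (X -` {x} \<inter> space M) * log b (prob (X -` {x} \<inter> space M)))"
    by (rule entropy_simple_distributed)
  also have "\<dots> = - (\<Sum>x\<in>A. prob (X -` {x} \<inter> space M) * log b (prob (X -` {x} \<inter> space M)))"
  proof -
    have "X -` {x} \<inter> space M = {}" if "x \<notin> X ` space M" for x
      using that by blast
    then show ?thesis
      using assms(2,3) by (intro arg_cong[where f = uminus] sum.mono_neutral_left) auto
  qed
  finally show ?thesis
    by (simp add: vimage_def Int_def conj_commute)
qed

lemma mutual_information_le_entropy:
  assumes "simple_function M X" and "simple_function M Y"
  shows "\<I>(X ; Y) \<le> \<H>(X)"
  using mutual_information_eq_entropy_conditional_entropy[OF assms] conditional_entropy_nonneg[OF assms]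
  by simp

end

theorem mainTheorem4:
  fixes M :: "'a measure" and X :: "nat \<Rightarrow> 'a \<Rightarrow> nat" and N Z :: nat
  assumes "prob_space M"
    and "N \<ge> 1"
    and "\<And>i. i \<in> {1..N} \<Longrightarrow> X i \<in> measurable M (count_space UNIV)"
    and "\<And>i \<omega>. i \<in> {1..N} \<Longrightarrow> \<omega> \<in> space M \<Longrightarrow> X i \<omega> \<in> {1..Z}"
  shows "PI M X N Z \<le> pooled_entropy M X N Z
           - (1 / (real N)^2) * (\<Sum>i=1..N. \<Sum>j=1..N. MI M X i j)"
proof -
  interpret information_space M 2
    using assms(1) by (simp add: information_space_def information_space_axioms_def)
  define H where "H i = - (\<Sum>z=1..Z. marg M X i z * log 2 (marg M X i z))" for i
  have range: "X i ` space M \<subseteq> {1..Z}" if "i \<in> {1..N}" for i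
    using assms(4)[OF that] by blast
  have simple: "simple_function M (X i)" if "i \<in> {1..N}" for i
    using assms(3)[OF that] range[OF that] by (simp add: simple_function_eq_measurable finite_subset)
  have MI_le: "MI M X i j \<le> H i" if "i \<in> {1..N}" "j \<in> {1..N}" for i j
    using mutual_information_le_entropy[OF simple[OF that(1)] simple[OF that(2)]]
      entropy_eq_sum_finite_range[OF simple[OF that(1)] range[OF that(1)]]
    by (auto simp: MI_def H_def marg_def)
  have marg_nonneg: "0 \<le> marg M X i z" for i z
    by (simp add: marg_def)
  have if_zero_mult: "(if x = 0 then 0 else x * y) = x * y" for x y :: real
    by simp
  have pooled_eq: "pooled M X N z = 1 / card {1..N} * (\<Sum>i\<in>{1..N}. marg M X i z)" for z
    by (simp add: pooled_def)
  have "PI M X N Z = pooled_entropy M X N Z - (1 / real N) * (\<Sum>i=1..N. H i)"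
    using mean_divergence_from_mixture[where A = "{1..Z}" and b = 2, OF _ _ marg_nonneg pooled_eq] assms(2)
    by (simp add: PI_def pooled_entropy_def H_def if_zero_mult)
  moreover have "(\<Sum>i=1..N. \<Sum>j=1..N. MI M X i j) \<le> (\<Sum>i=1..N. \<Sum>j=1..N. H i)"
    by (intro sum_mono MI_le) auto
  then have "(1 / (real N)^2) * (\<Sum>i=1..N. \<Sum>j=1..N. MI M X i j)
      \<le> (1 / (real N)^2) * (real N * (\<Sum>i=1..N. H i))"
    by (intro mult_left_mono) (simp_all add: sum_distrib_left)
  then have "(1 / (real N)^2) * (\<Sum>i=1..N. \<Sum>j=1..N. MI M X i j) \<le> (1 / real N) * (\<Sum>i=1..N. H i)"
    using assms(2) by (simp add: power2_eq_square)
  ultimately show ?thesis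
    by simp
qed

end
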